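(* Let $\mathcal{P}_{XY}$ be a probability measure on a product measurable space $(\mathcal{X}\times\mathcal{Y},\mathcal{F})$ with marginals $\mathcal{P}_X,\mathcal{P}_Y$, and assume $\mathcal{P}_{XY}\ll\mathcal{P}_X\mathcal{P}_Y$. Then for every $E\in\mathcal{F}$, $$\mathcal{P}_{XY}(E)\le\left(\operatorname*{ess\,sup}_{\mathcal{P}_Y}\mathcal{P}_X(E_Y)\right)\exp\left(\mathcal{L}(X\to Y)\right).$$
   Context: For $E\in\mathcal{F}$ and $y\in\mathcal{Y}$, $E_y:=\{x:(x,y)\in E\}$; $\operatorname*{ess\,sup}_{\mathcal{P}_Y}\mathcal{P}_X(E_Y)$ is the $\mathcal{P}_Y$-essential supremum of $y\mapsto\mathcal{P}_X(E_y)$. The maximal leakage from $X$ to $Y$ (Sibson mutual information of order $\infty$) is, with $f=\frac{d\mathcal{P}_{XY}}{d\mathcal{P}_X\mathcal{P}_Y}$, $\mathcal{L}(X\to Y)=I_\infty(X;Y)=\log\mathbb{E}_{\mathcal{P}_Y}\left[\operatorname*{ess\,sup}_{\mathcal{P}_X}f(\cdot,Y)\right]$, where for fixed $y$ the essential supremum of $x\mapsto f(x,y)$ is taken with respect to $\mathcal{P}_X$ (for discrete alphabets this is $\log\mathbb{E}_{\mathcal{P}_Y}\left[\sup_{x:\mathcal{P}_X(x)>0}\frac{\mathcal{P}_{XY}(x,Y)}{\mathcal{P}_X(x)\mathcal{P}_Y(Y)}\right]$). Logarithms are natural. *)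

theory Defs
  imports "HOL-Probability.Probability"
begin

definition exp_ereal :: "ereal \<Rightarrow> ennreal" where
  "exp_ereal t = (case t of ereal r \<Rightarrow> ennreal (exp r) | PInfty \<Rightarrow> \<infinity> | MInfty \<Rightarrow> 0)"

definition ln_ennreal :: "ennreal \<Rightarrow> ereal" where
  "ln_ennreal t = (if t = \<infinity> then \<infinity> else if t = 0 then -\<infinity> else ereal (ln (enn2real t)))"

definition maximal_leakage :: "'a measure \<Rightarrow> 'b measure \<Rightarrow> ('a \<times> 'b) measure \<Rightarrow> ereal" where
  "maximal_leakage PX PY PXY =
     ln_ennreal (\<integral>\<^sup>+ y. esssup PX (\<lambda>x. RN_deriv (PX \<Otimes>\<^sub>M PY) PXY (x, y)) \<partial>PY)"

end

theory Submission
  imports Defs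
begin

text \<open>Write \<open>f\<close> for the density of \<open>P\<^sub>X\<^sub>Y\<close> with respect to \<open>P\<^sub>X \<times> P\<^sub>Y\<close> and \<open>g y\<close> for the
  essential supremum of \<open>f (\<cdot>, y)\<close>. By Tonelli, \<open>P\<^sub>X\<^sub>Y(E)\<close> is the \<open>P\<^sub>Y\<close>-integral of the
  \<open>P\<^sub>X\<close>-integral of \<open>f (\<cdot>, y)\<close> over the section \<open>E\<^sub>y\<close>; the inner integral is at most
  \<open>g y \<cdot> P\<^sub>X(E\<^sub>y)\<close>, and bounding \<open>P\<^sub>X(E\<^sub>y)\<close> by its essential supremum in \<open>y\<close> leaves
  \<open>\<integral> g dP\<^sub>Y = exp (\<L>(X \<rightarrow> Y))\<close>.\<close>

lemma exp_ereal_ln_ennreal [simp]: "exp_ereal (ln_ennreal t) = t"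
proof (cases "t = \<infinity> \<or> t = 0")
  case False
  then have "0 < enn2real t"
    by (simp add: enn2real_positive_iff top.not_eq_extremum zero_less_iff_neq_zero)
  with False show ?thesis
    by (simp add: exp_ereal_def ln_ennreal_def ennreal_enn2real_if)
qed (auto simp: exp_ereal_def ln_ennreal_def)

lemma less_esssup_iff:
  fixes f :: "'a \<Rightarrow> ennreal"
  assumes "f \<in> borel_measurable M"
  shows "a < esssup M f \<longleftrightarrow> emeasure M {x\<in>space M. a < f x} \<noteq> 0"
proof -
  have "esssup M f \<le> a \<longleftrightarrow> (AE x in M. f x \<le> a)"
    using esssup_I[OF assms] esssup_AE[of f M] by (auto elim: AE_mp intro: order_trans)
  also have "\<dots> \<longleftrightarrow> emeasure M {x\<in>space M. a < f x} = 0"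
    by (subst AE_iff_measurable[OF _ refl]) (use assms in \<open>auto simp: not_le\<close>)
  finally show ?thesis
    by (simp add: not_le[symmetric])
qed

lemma nn_integral_mult_le_esssup:
  fixes f g :: "'a \<Rightarrow> ennreal"
  assumes "f \<in> borel_measurable M"
  shows "(\<integral>\<^sup>+x. f x * g x \<partial>M) \<le> (\<integral>\<^sup>+x. f x \<partial>M) * esssup M g"
proof -
  have "(\<integral>\<^sup>+x. f x * g x \<partial>M) \<le> (\<integral>\<^sup>+x. f x * esssup M g \<partial>M)"
    using esssup_AE[of g M] by (intro nn_integral_mono_AE) (erule AE_mp, auto intro!: AE_I2 mult_left_mono)
  also have "\<dots> = (\<integral>\<^sup>+x. f x \<partial>M) * esssup M g"
    using assms by (rule nn_integral_multc)
  finally show ?thesis .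
qed

lemma (in pair_sigma_finite) borel_measurable_esssup_fst:
  fixes f :: "'a \<times> 'b \<Rightarrow> ennreal"
  assumes f[measurable]: "f \<in> borel_measurable (M1 \<Otimes>\<^sub>M M2)"
  shows "(\<lambda>y. esssup M1 (\<lambda>x. f (x, y))) \<in> borel_measurable M2"
proof (rule borel_measurableI_greater)
  fix a
  define Q where "Q = {z\<in>space (M1 \<Otimes>\<^sub>M M2). a < f z}"
  have Q: "Q \<in> sets (M1 \<Otimes>\<^sub>M M2)"
    unfolding Q_def by measurable
  have "a < esssup M1 (\<lambda>x. f (x, y)) \<longleftrightarrow> emeasure M1 ((\<lambda>x. (x, y)) -` Q) \<noteq> 0"
    if "y \<in> space M2" for y
  proof -
    have "(\<lambda>x. (x, y)) -` Q = {x\<in>space M1. a < f (x, y)}"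
      using that by (auto simp: Q_def space_pair_measure)
    moreover have "(\<lambda>x. f (x, y)) \<in> borel_measurable M1"
      using that by measurable
    ultimately show ?thesis
      by (simp add: less_esssup_iff)
  qed
  then have "{y\<in>space M2. a < esssup M1 (\<lambda>x. f (x, y))}
      = {y\<in>space M2. emeasure M1 ((\<lambda>x. (x, y)) -` Q) \<noteq> 0}"
    by auto
  also have "\<dots> \<in> sets M2"
    using measurable_emeasure_Pair2[OF Q] by measurable
  finally show "{y\<in>space M2. a < esssup M1 (\<lambda>x. f (x, y))} \<in> sets M2" .
qed

lemma (in pair_sigma_finite) emeasure_density_le_esssup_sections:
  fixes f :: "'a \<times> 'b \<Rightarrow> ennreal"
  assumes f[measurable]: "f \<in> borel_measurable (M1 \<Otimes>\<^sub>M M2)"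
    and E[measurable]: "E \<in> sets (M1 \<Otimes>\<^sub>M M2)"
  shows "emeasure (density (M1 \<Otimes>\<^sub>M M2) f) E
    \<le> esssup M2 (\<lambda>y. emeasure M1 ((\<lambda>x. (x, y)) -` E \<inter> space M1))
      * (\<integral>\<^sup>+y. esssup M1 (\<lambda>x. f (x, y)) \<partial>M2)"
proof -
  define g where "g y = esssup M1 (\<lambda>x. f (x, y))" for y
  define h where "h y = emeasure M1 ((\<lambda>x. (x, y)) -` E \<inter> space M1)" for y
  have g: "g \<in> borel_measurable M2"
    unfolding g_def by (rule borel_measurable_esssup_fst[OF f])
  have "emeasure (density (M1 \<Otimes>\<^sub>M M2) f) E = (\<integral>\<^sup>+z. f z * indicator E z \<partial>(M1 \<Otimes>\<^sub>M M2))"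
    by (simp add: emeasure_density nn_integral_set_ennreal mult.commute)
  also have "\<dots> = (\<integral>\<^sup>+y. \<integral>\<^sup>+x. indicator ((\<lambda>x. (x, y)) -` E \<inter> space M1) x * f (x, y) \<partial>M1 \<partial>M2)"
    by (subst nn_integral_snd[symmetric])
      (auto intro!: nn_integral_cong simp: indicator_def)
  also have "\<dots> \<le> (\<integral>\<^sup>+y. h y * g y \<partial>M2)"
  proof (rule nn_integral_mono)
    fix y assume "y \<in> space M2"
    then have "(\<lambda>x. (x, y)) -` E \<inter> space M1 \<in> sets M1"
      by (auto intro: measurable_sets_Collect)
    then show "(\<integral>\<^sup>+x. indicator ((\<lambda>x. (x, y)) -` E \<inter> space M1) x * f (x, y) \<partial>M1) \<le> h y * g y"
      using nn_integral_mult_le_esssup[of "indicator ((\<lambda>x. (x, y)) -` E \<inter> space M1)" M1]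
      by (simp add: g_def h_def)
  qed
  also have "\<dots> \<le> esssup M2 h * (\<integral>\<^sup>+y. g y \<partial>M2)"
    using nn_integral_mult_le_esssup[OF g, of h] by (simp add: mult.commute)
  finally show ?thesis
    unfolding g_def h_def .
qed

theorem corollary3:
  fixes PX :: "'a measure" and PY :: "'b measure" and PXY :: "('a \<times> 'b) measure"
  assumes "prob_space PX" and "prob_space PY" and "prob_space PXY"
    and "sets PXY = sets (PX \<Otimes>\<^sub>M PY)"
    and "distr PXY PX fst = PX" and "distr PXY PY snd = PY"
    and "absolutely_continuous (PX \<Otimes>\<^sub>M PY) PXY"
    and "E \<in> sets (PX \<Otimes>\<^sub>M PY)"
  shows "emeasure PXY E
           \<le> esssup PY (\<lambda>y. emeasure PX ((\<lambda>x. (x, y)) -` E \<inter> space PX))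
             * exp_ereal (maximal_leakage PX PY PXY)"
proof -
  interpret pair_sigma_finite PX PY
    using assms(1,2) by (simp add: pair_sigma_finite_def prob_space_imp_sigma_finite)
  have density: "density (PX \<Otimes>\<^sub>M PY) (RN_deriv (PX \<Otimes>\<^sub>M PY) PXY) = PXY"
    using assms(4,7) by (intro P.density_RN_deriv) auto
  show ?thesis
    using emeasure_density_le_esssup_sections[OF borel_measurable_RN_deriv assms(8), of PXY]
    by (simp add: density maximal_leakage_def)
qed

end
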